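(* Let $n\ge 1$ and let $k_1<k_2<\cdots<k_n$ be integers. Then the number of monotone triangles with $n$ rows and bottom row $(k_1,k_2,\ldots,k_n)$ is equal to the value at $(x_1,\ldots,x_n)=(k_1,\ldots,k_n)$ of the polynomial $$\left( \prod_{1 \le p < q \le n} \left( \operatorname{id} + E_{x_p} \Delta_{x_q} \right) \right) \prod_{1 \le i < j \le n} \frac{x_j - x_i}{j-i}.$$
   Context: A monotone triangle with $n$ rows is a triangular array $(a_{i,j})_{1\le j\le i\le n}$ of integers such that $a_{i,j}\le a_{i-1,j}\le a_{i,j+1}$ and $a_{i,j}<a_{i,j+1}$ whenever the indices are in range; its bottom row is $(a_{n,1},\ldots,a_{n,n})$. For a variable $x$, $E_x$ is the shift operator on polynomials, $E_x\,p(x)=p(x+1)$ (other variables fixed), and $\Delta_x=E_x-\operatorname{id}$ is the difference operator. Products of operators denote composition; the operators $E_{x_p},\Delta_{x_q}$ all commute, so the order of the factors is irrelevant. The operator is applied to the polynomial in $x_1,\ldots,x_n$ and the result is then evaluated at $x_i=k_i$. *)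

theory Defs
  imports Complex_Main
begin

text \<open>Monotone triangle with n rows, entries a i j for 1 \<le> j \<le> i \<le> n;
  entries outside this index range are normalised to 0 so that triangles
  correspond bijectively to such functions.\<close>
definition monotone_triangle :: "nat \<Rightarrow> (nat \<Rightarrow> nat \<Rightarrow> int) \<Rightarrow> bool" where
  "monotone_triangle n a \<longleftrightarrow>
     (\<forall>i j. \<not> (1 \<le> j \<and> j \<le> i \<and> i \<le> n) \<longrightarrow> a i j = 0) \<and>
     (\<forall>i j. 2 \<le> i \<and> i \<le> n \<and> 1 \<le> j \<and> j \<le> i - 1 \<longrightarrow>
             a i j \<le> a (i - 1) j \<and> a (i - 1) j \<le> a i (j + 1)) \<and>
     (\<forall>i j. 1 \<le> j \<and> j < i \<and> i \<le> n \<longrightarrow> a i j < a i (j + 1))"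

definition monotone_triangles :: "nat \<Rightarrow> (nat \<Rightarrow> int) \<Rightarrow> (nat \<Rightarrow> nat \<Rightarrow> int) set" where
  "monotone_triangles n k = {a. monotone_triangle n a \<and> (\<forall>j\<in>{1..n}. a n j = k j)}"

definition shiftE :: "nat \<Rightarrow> ((nat \<Rightarrow> real) \<Rightarrow> real) \<Rightarrow> ((nat \<Rightarrow> real) \<Rightarrow> real)" where
  "shiftE p f = (\<lambda>x. f (x(p := x p + 1)))"

definition diffD :: "nat \<Rightarrow> ((nat \<Rightarrow> real) \<Rightarrow> real) \<Rightarrow> ((nat \<Rightarrow> real) \<Rightarrow> real)" where
  "diffD p f = (\<lambda>x. shiftE p f x - f x)"

definition opPQ :: "nat \<Rightarrow> nat \<Rightarrow> ((nat \<Rightarrow> real) \<Rightarrow> real) \<Rightarrow> ((nat \<Rightarrow> real) \<Rightarrow> real)" where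
  "opPQ p q f = (\<lambda>x. f x + shiftE p (diffD q f) x)"

definition fischer_op :: "nat \<Rightarrow> ((nat \<Rightarrow> real) \<Rightarrow> real) \<Rightarrow> ((nat \<Rightarrow> real) \<Rightarrow> real)" where
  "fischer_op n = foldr (\<lambda>(p, q) g. opPQ p q \<circ> g)
                     [(p, q). p \<leftarrow> [1..<n+1], q \<leftarrow> [p+1..<n+1]] id"

definition vdm :: "nat \<Rightarrow> (nat \<Rightarrow> real) \<Rightarrow> real" where
  "vdm n x = (\<Prod>(i, j)\<in>{(i, j). 1 \<le> i \<and> i < j \<and> j \<le> n}.
                 (x j - x i) / (real j - real i))"

end

theory Submission
  imports Defs "HOL-Combinatorics.Transposition" "Jordan_Normal_Form.Determinant"
begin

text \<open>
  The polynomial \<Prod>_{i<j} (x_j - x_i) / (j - i) is the determinant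
  det (x_i gchoose (j - 1)), and \<Delta>_1 \<dots> \<Delta>_m maps G_m = det (x_i gchoose j) to the same
  determinant of size m. Deleting the bottom row of a monotone triangle leaves a triangle whose
  bottom row l interlaces k, so by induction the number of triangles is the sum over all interlacing
  l of \<Delta>_1 \<dots> \<Delta>_{n-1} F (l), where F is the operator applied to G_{n-1}. Summing out one
  coordinate at a time telescopes this to
  \<Sum>_r (-1)^(r-1) F (k_1, \<dots>, k_{r-1}, k_{r+1} + 1, \<dots>, k_n + 1); the rows with two equal
  neighbouring entries are accounted for by the identity (id + E_{i+1} \<Delta>_i) F = 0 on x_i = x_{i+1},
  which holds because G is antisymmetric while the operator is symmetric under swapping x_i and
  x_{i+1}. The same alternating sum arises when the operator is applied to the expansion of
  det (x_i gchoose (j - 1)) along its first column: on a minor not depending on x_r the operator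
  acts as the shift of x_{r+1}, \<dots>, x_n.
\<close>

section \<open>Shift and difference operators\<close>

lemma shiftE_commute: "shiftE p (shiftE q f) = shiftE q (shiftE p f)"
  by (cases "p = q") (auto simp: shiftE_def fun_upd_twist)

lemma shiftE_add: "shiftE p (\<lambda>x. f x + g x) = (\<lambda>x. shiftE p f x + shiftE p g x)"
  and shiftE_diff: "shiftE p (\<lambda>x. f x - g x) = (\<lambda>x. shiftE p f x - shiftE p g x)"
  by (simp_all add: shiftE_def)

lemma opPQ_eq: "opPQ p q f = (\<lambda>x. f x + shiftE p (shiftE q f) x - shiftE p f x)"
  by (simp add: opPQ_def diffD_def shiftE_def add_diff_eq)

lemma opPQ_apply:
  "p \<noteq> q \<Longrightarrow> opPQ p q f x = f x + f (x(p := x p + 1, q := x q + 1)) - f (x(p := x p + 1))"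
  by (simp add: opPQ_eq shiftE_def)

lemma opPQ_commute: "opPQ a b (opPQ c d f) = opPQ c d (opPQ a b f)"
  unfolding opPQ_eq shiftE_add shiftE_diff by (simp add: shiftE_commute algebra_simps)

lemma diffD_commute: "diffD a (diffD b f) = diffD b (diffD a f)"
  unfolding diffD_def shiftE_diff by (simp add: shiftE_commute algebra_simps)

lemma opPQ_diffD_commute: "opPQ a b (diffD p f) = diffD p (opPQ a b f)"
  unfolding diffD_def opPQ_eq shiftE_add shiftE_diff by (simp add: shiftE_commute algebra_simps)

lemma opPQ_sum:
  "opPQ p q (\<lambda>x. \<Sum>r\<in>R. c r * f r x) = (\<lambda>x. \<Sum>r\<in>R. c r * opPQ p q (f r) x)"
  by (simp add: opPQ_eq shiftE_def sum.distrib sum_subtractf algebra_simps)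

lemma opPQ_uminus: "opPQ p q (\<lambda>x. - f x) = (\<lambda>x. - opPQ p q f x)"
  by (simp add: opPQ_eq shiftE_def algebra_simps)

lemma opPQ_invariant_second: "shiftE q H = H \<Longrightarrow> opPQ p q H = H"
  by (simp add: opPQ_eq)

lemma opPQ_invariant_first:
  assumes "shiftE p H = H"
  shows "opPQ p q H = shiftE q H"
proof -
  have "shiftE p (shiftE q H) = shiftE q H"
    by (metis assms shiftE_commute)
  then show ?thesis
    by (simp add: opPQ_eq assms)
qed

lemma shiftE_fix: "q \<noteq> p \<Longrightarrow> shiftE q (\<lambda>x. F (x(p := v))) = (\<lambda>x. shiftE q F (x(p := v)))"
  by (simp add: shiftE_def fun_upd_twist)

lemma diffD_fix: "q \<noteq> p \<Longrightarrow> diffD q (\<lambda>x. F (x(p := v))) = (\<lambda>x. diffD q F (x(p := v)))"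
  by (simp add: diffD_def shiftE_fix)

lemma opPQ_fix:
  "a \<noteq> p \<Longrightarrow> b \<noteq> p \<Longrightarrow> opPQ a b (\<lambda>x. F (x(p := v))) = (\<lambda>x. opPQ a b F (x(p := v)))"
  by (simp add: opPQ_eq shiftE_fix)

section \<open>Products of the operators over sets of index pairs\<close>

definition op_prod :: "(nat \<times> nat) set \<Rightarrow> ((nat \<Rightarrow> real) \<Rightarrow> real) \<Rightarrow> (nat \<Rightarrow> real) \<Rightarrow> real" where
  "op_prod S f = Finite_Set.fold (case_prod opPQ) f S"

lemma comp_fun_commute_opPQ: "comp_fun_commute (case_prod opPQ)"
  by unfold_locales (auto simp: fun_eq_iff opPQ_commute)

lemma op_prod_empty [simp]: "op_prod {} f = f"
  by (simp add: op_prod_def)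

lemma op_prod_insert:
  assumes "finite S" "(p, q) \<notin> S"
  shows "op_prod (insert (p, q) S) f = opPQ p q (op_prod S f)"
proof -
  interpret comp_fun_commute "case_prod opPQ"
    by (rule comp_fun_commute_opPQ)
  show ?thesis
    using assms by (simp add: op_prod_def)
qed

lemma op_prod_Un_disjoint:
  assumes "finite A" "finite B" "A \<inter> B = {}"
  shows "op_prod (A \<union> B) f = op_prod B (op_prod A f)"
proof -
  interpret comp_fun_commute "case_prod opPQ"
    by (rule comp_fun_commute_opPQ)
  show ?thesis
    using assms by (simp add: op_prod_def fold_set_union_disj)
qed

lemma finite_pair_induct [consumes 1, case_names empty insert]:
  assumes "finite S" "P {}"
    and "\<And>p q S. finite S \<Longrightarrow> (p, q) \<notin> S \<Longrightarrow> P S \<Longrightarrow> P (insert (p, q) S)"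
  shows "P S"
  using assms(1) by (induction rule: finite_induct) (auto intro: assms(2,3))

lemma op_prod_diffD_commute: "finite S \<Longrightarrow> op_prod S (diffD p f) = diffD p (op_prod S f)"
  by (induction S rule: finite_pair_induct) (simp_all add: op_prod_insert opPQ_diffD_commute)

lemma op_prod_sum:
  "finite S \<Longrightarrow> op_prod S (\<lambda>x. \<Sum>r\<in>R. c r * f r x) = (\<lambda>x. \<Sum>r\<in>R. c r * op_prod S (f r) x)"
  by (induction S rule: finite_pair_induct) (simp_all add: op_prod_insert opPQ_sum)

lemma op_prod_uminus: "finite S \<Longrightarrow> op_prod S (\<lambda>x. - f x) = (\<lambda>x. - op_prod S f x)"
  by (induction S rule: finite_pair_induct) (simp_all add: op_prod_insert opPQ_uminus)

definition increasing_pairs :: "nat \<Rightarrow> (nat \<times> nat) set" where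
  "increasing_pairs n = {(p, q). 1 \<le> p \<and> p < q \<and> q \<le> n}"

lemma finite_increasing_pairs [simp]: "finite (increasing_pairs n)"
  by (rule finite_subset[of _ "{1..n} \<times> {1..n}"]) (auto simp: increasing_pairs_def)

lemma distinct_concat_map_Pair:
  "distinct xs \<Longrightarrow> (\<And>p. distinct (f p)) \<Longrightarrow> distinct (concat (map (\<lambda>p. map (Pair p) (f p)) xs))"
  by (induction xs) (auto simp: distinct_map inj_on_def)

lemma fischer_op_eq_op_prod: "fischer_op n = op_prod (increasing_pairs n)"
proof
  fix f
  interpret comp_fun_commute "case_prod opPQ"
    by (rule comp_fun_commute_opPQ)
  let ?L = "[(p, q). p \<leftarrow> [1..<n+1], q \<leftarrow> [p+1..<n+1]]"
  have "foldr (\<lambda>(p, q) g. opPQ p q \<circ> g) xs id = foldr (case_prod opPQ) xs" for xs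
    by (induction xs) auto
  then have "fischer_op n f = fold (case_prod opPQ) (rev ?L) f"
    by (simp add: fischer_op_def foldr_conv_fold)
  also have "\<dots> = fold (case_prod opPQ) (remdups (rev ?L)) f"
  proof -
    have "distinct ?L"
      by (rule distinct_concat_map_Pair) simp_all
    then show ?thesis
      by (simp add: distinct_remdups_id)
  qed
  also have "\<dots> = Finite_Set.fold (case_prod opPQ) f (set (rev ?L))"
    by (rule fold_set_fold_remdups[symmetric])
  also have "set (rev ?L) = increasing_pairs n"
    by (auto simp: increasing_pairs_def image_iff)
  finally show "fischer_op n f = op_prod (increasing_pairs n) f"
    by (simp add: op_prod_def)
qed

lemma shiftE_relabel:
  assumes "inj \<pi>"
  shows "shiftE (\<pi> j) (\<lambda>x. G (\<lambda>i. x (\<pi> i))) = (\<lambda>x. shiftE j G (\<lambda>i. x (\<pi> i)))"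
proof -
  have "(\<lambda>i. (x(\<pi> j := v)) (\<pi> i)) = (\<lambda>i. x (\<pi> i))(j := v)" for x :: "nat \<Rightarrow> real" and v
    using assms by (auto simp: fun_eq_iff inj_eq)
  then show ?thesis
    by (simp add: shiftE_def)
qed

lemma shiftE_relabel_outside:
  assumes "p \<notin> range \<pi>"
  shows "shiftE p (\<lambda>x. G (\<lambda>i. x (\<pi> i))) = (\<lambda>x. G (\<lambda>i. x (\<pi> i)))"
proof -
  have "(\<lambda>i. (x(p := v)) (\<pi> i)) = (\<lambda>i. x (\<pi> i))" for x :: "nat \<Rightarrow> real" and v
    using assms by (auto simp: fun_eq_iff)
  then show ?thesis
    by (simp add: shiftE_def)
qed

lemma opPQ_relabel:
  "inj \<pi> \<Longrightarrow> opPQ (\<pi> p) (\<pi> q) (\<lambda>x. G (\<lambda>i. x (\<pi> i))) = (\<lambda>x. opPQ p q G (\<lambda>i. x (\<pi> i)))"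
  by (simp add: opPQ_eq shiftE_relabel)

lemma op_prod_relabel:
  assumes "inj \<pi>" "finite S"
  shows "op_prod (map_prod \<pi> \<pi> ` S) (\<lambda>x. G (\<lambda>i. x (\<pi> i))) = (\<lambda>x. op_prod S G (\<lambda>i. x (\<pi> i)))"
  using assms(2)
proof (induction S rule: finite_pair_induct)
  case (insert p q S)
  then have "(\<pi> p, \<pi> q) \<notin> map_prod \<pi> \<pi> ` S"
    using assms(1) by (auto simp: inj_eq)
  with insert have "op_prod (map_prod \<pi> \<pi> ` insert (p, q) S) (\<lambda>x. G (\<lambda>i. x (\<pi> i)))
      = opPQ (\<pi> p) (\<pi> q) (\<lambda>x. op_prod S G (\<lambda>i. x (\<pi> i)))"
    by (simp add: op_prod_insert)
  also have "\<dots> = (\<lambda>x. opPQ p q (op_prod S G) (\<lambda>i. x (\<pi> i)))"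
    by (rule opPQ_relabel[OF assms(1)])
  finally show ?case
    using insert by (simp add: op_prod_insert)
qed simp

lemma op_prod_antisymmetric_vanishes:
  assumes "inj \<pi>" "finite S" "map_prod \<pi> \<pi> ` S = S"
    and "\<And>x. G (\<lambda>i. x (\<pi> i)) = - G x" and "(\<lambda>i. x (\<pi> i)) = x"
  shows "op_prod S G x = 0"
proof -
  have "op_prod S G (\<lambda>i. x (\<pi> i)) = op_prod S (\<lambda>x. G (\<lambda>i. x (\<pi> i))) x"
    using op_prod_relabel[OF assms(1,2), of G] assms(3) by metis
  also have "\<dots> = - op_prod S G x"
    by (simp add: assms(4) op_prod_uminus[OF assms(2)])
  finally show ?thesis
    using assms(5) by simp
qed

definition adjacent_vanishing :: "nat \<Rightarrow> ((nat \<Rightarrow> real) \<Rightarrow> real) \<Rightarrow> bool" where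
  "adjacent_vanishing n F \<longleftrightarrow>
     (\<forall>i x. 1 \<le> i \<longrightarrow> Suc i \<le> n \<longrightarrow> x i = x (Suc i) \<longrightarrow> opPQ (Suc i) i F x = 0)"

lemma transpose_image_increasing_pairs:
  assumes "1 \<le> i" "Suc i \<le> n"
  defines "\<tau> \<equiv> map_prod (transpose i (Suc i)) (transpose i (Suc i))"
  shows "\<tau> ` insert (Suc i, i) (increasing_pairs n) = insert (Suc i, i) (increasing_pairs n)"
    (is "\<tau> ` ?Q = ?Q")
proof (rule subset_antisym)
  show sub: "\<tau> ` ?Q \<subseteq> ?Q"
  proof (rule image_subsetI)
    fix a assume "a \<in> ?Q"
    then show "\<tau> a \<in> ?Q"
      using assms(1,2) by (cases a) (auto simp: \<tau>_def increasing_pairs_def transpose_def)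
  qed
  have inv: "\<tau> (\<tau> a) = a" for a
    by (cases a) (simp add: \<tau>_def)
  have "?Q = \<tau> ` \<tau> ` ?Q"
    by (simp only: image_image inv image_ident)
  then show "?Q \<subseteq> \<tau> ` ?Q"
    using image_mono[OF sub, of \<tau>] by (rule ord_eq_le_trans)
qed

lemma adjacent_vanishing_op_prod:
  assumes "\<And>i x. 1 \<le> i \<Longrightarrow> Suc i \<le> n \<Longrightarrow> G (\<lambda>j. x (transpose i (Suc i) j)) = - G x"
  shows "adjacent_vanishing n (op_prod (increasing_pairs n) G)"
  unfolding adjacent_vanishing_def
proof (intro allI impI)
  fix i and x :: "nat \<Rightarrow> real"
  assume i: "1 \<le> i" "Suc i \<le> n" and diag: "x i = x (Suc i)"
  have "(Suc i, i) \<notin> increasing_pairs n"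
    by (simp add: increasing_pairs_def)
  then have "opPQ (Suc i) i (op_prod (increasing_pairs n) G) x
      = op_prod (insert (Suc i, i) (increasing_pairs n)) G x"
    by (simp add: op_prod_insert)
  also have "\<dots> = 0"
  proof (rule op_prod_antisymmetric_vanishes)
    show "inj (transpose i (Suc i))"
      by (rule inj_transpose)
    show "\<And>y. G (\<lambda>j. y (transpose i (Suc i) j)) = - G y"
      by (rule assms[OF i])
    show "(\<lambda>j. x (transpose i (Suc i) j)) = x"
      using diag by (auto simp: fun_eq_iff transpose_def)
    show "map_prod (transpose i (Suc i)) (transpose i (Suc i)) ` insert (Suc i, i) (increasing_pairs n)
        = insert (Suc i, i) (increasing_pairs n)"
      using i by (rule transpose_image_increasing_pairs)
  qed simp
  finally show "opPQ (Suc i) i (op_prod (increasing_pairs n) G) x = 0" .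
qed

definition skip :: "nat \<Rightarrow> nat \<Rightarrow> nat" where
  "skip r p = (if p < r then p else Suc p)"

lemma inj_skip: "inj (skip r)"
  by (auto simp: inj_def skip_def split: if_splits)

lemma skip_not_in_range: "r \<notin> range (skip r)"
  by (auto simp: skip_def)

definition shift_coords :: "nat set \<Rightarrow> (nat \<Rightarrow> real) \<Rightarrow> nat \<Rightarrow> real" where
  "shift_coords Q x = (\<lambda>i. if i \<in> Q then x i + 1 else x i)"

lemma op_prod_invariant_column:
  assumes "finite S" "S \<subseteq> UNIV \<times> {r}" "shiftE r H = H"
  shows "op_prod S H = H"
  using assms(1,2)
  by (induction S rule: finite_pair_induct) (simp_all add: op_prod_insert opPQ_invariant_second assms(3))

lemma op_prod_invariant_row:
  assumes "finite Q" "r \<notin> Q" "shiftE r H = H"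
  shows "op_prod ({r} \<times> Q) H = (\<lambda>x. H (shift_coords Q x))"
  using assms(1,2)
proof (induction Q rule: finite_induct)
  case (insert q Q)
  let ?HQ = "\<lambda>x. H (shift_coords Q x)"
  have "shift_coords Q (x(r := x r + 1)) = (shift_coords Q x)(r := shift_coords Q x r + 1)" for x
    using insert.prems by (auto simp: shift_coords_def)
  then have inv: "shiftE r ?HQ = ?HQ"
    using fun_cong[OF assms(3)] by (simp add: shiftE_def)
  have "{r} \<times> insert q Q = insert (r, q) ({r} \<times> Q)"
    by auto
  then have "op_prod ({r} \<times> insert q Q) H = opPQ r q ?HQ"
    using insert by (simp add: op_prod_insert)
  also have "\<dots> = shiftE q ?HQ"
    by (rule opPQ_invariant_first[OF inv])
  also have "\<dots> = (\<lambda>x. H (shift_coords (insert q Q) x))"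
  proof -
    have "shift_coords Q (x(q := x q + 1)) = shift_coords (insert q Q) x" for x
      using insert.hyps(2) by (auto simp: shift_coords_def)
    then show ?thesis
      by (simp add: shiftE_def)
  qed
  finally show ?case .
qed (simp add: shift_coords_def)

lemma increasing_pairs_split:
  assumes "1 \<le> r" "r \<le> n"
  shows "increasing_pairs n
    = ({1..<r} \<times> {r} \<union> map_prod (skip r) (skip r) ` increasing_pairs (n - 1)) \<union> {r} \<times> {r<..n}"
    (is "_ = (?B \<union> ?A) \<union> ?C")
proof (rule subset_antisym)
  show "increasing_pairs n \<subseteq> (?B \<union> ?A) \<union> ?C"
  proof
    fix pq assume pq: "pq \<in> increasing_pairs n"
    obtain a b where ab: "pq = (a, b)"
      by fastforce
    show "pq \<in> (?B \<union> ?A) \<union> ?C"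
    proof (cases "a = r \<or> b = r")
      case True
      then show ?thesis
        using pq ab by (auto simp: increasing_pairs_def)
    next
      case False
      define unskip where "unskip a = (if a < r then a else a - 1)" for a
      have "(unskip a, unskip b) \<in> increasing_pairs (n - 1)"
        using pq ab False assms by (auto simp: increasing_pairs_def unskip_def)
      moreover have "pq = map_prod (skip r) (skip r) (unskip a, unskip b)"
        using ab False by (auto simp: skip_def unskip_def)
      ultimately show ?thesis
        by blast
    qed
  qed
  show "(?B \<union> ?A) \<union> ?C \<subseteq> increasing_pairs n"
    using assms by (auto simp: increasing_pairs_def skip_def)
qed

lemma op_prod_skip:
  assumes "1 \<le> r" "r \<le> n"
  shows "op_prod (increasing_pairs n) (\<lambda>x. G (\<lambda>i. x (skip r i)))
    = (\<lambda>x. op_prod (increasing_pairs (n - 1)) G (\<lambda>i. shift_coords {r<..n} x (skip r i)))"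
proof -
  let ?B = "{1..<r} \<times> {r}" and ?A = "map_prod (skip r) (skip r) ` increasing_pairs (n - 1)"
    and ?C = "{r} \<times> {r<..n}"
  have invariant: "shiftE r (\<lambda>x. F (\<lambda>i. x (skip r i))) = (\<lambda>x. F (\<lambda>i. x (skip r i)))" for F
    by (rule shiftE_relabel_outside[OF skip_not_in_range])
  have "?B \<inter> ?A = {}" "(?B \<union> ?A) \<inter> ?C = {}"
    by (auto simp: skip_def split: if_splits)
  then have "op_prod (increasing_pairs n) (\<lambda>x. G (\<lambda>i. x (skip r i)))
      = op_prod ?C (op_prod ?A (op_prod ?B (\<lambda>x. G (\<lambda>i. x (skip r i)))))"
    by (simp add: increasing_pairs_split[OF assms] op_prod_Un_disjoint)
  also have "op_prod ?B (\<lambda>x. G (\<lambda>i. x (skip r i))) = (\<lambda>x. G (\<lambda>i. x (skip r i)))"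
    by (rule op_prod_invariant_column) (auto simp: invariant)
  also have "op_prod ?A (\<lambda>x. G (\<lambda>i. x (skip r i)))
      = (\<lambda>x. op_prod (increasing_pairs (n - 1)) G (\<lambda>i. x (skip r i)))"
    by (rule op_prod_relabel[OF inj_skip]) simp
  also have "op_prod ?C \<dots>
      = (\<lambda>x. op_prod (increasing_pairs (n - 1)) G (\<lambda>i. shift_coords {r<..n} x (skip r i)))"
    by (rule op_prod_invariant_row) (simp_all add: invariant)
  finally show ?thesis .
qed

section \<open>Iterated differences\<close>

lemma adjacent_vanishing_mono: "adjacent_vanishing n F \<Longrightarrow> m \<le> n \<Longrightarrow> adjacent_vanishing m F"
  by (auto simp: adjacent_vanishing_def)

lemma adjacent_vanishing_fix:
  assumes "adjacent_vanishing n F" "n < p"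
  shows "adjacent_vanishing n (\<lambda>x. F (x(p := v)))"
  unfolding adjacent_vanishing_def
proof (intro allI impI)
  fix i and x :: "nat \<Rightarrow> real"
  assume i: "1 \<le> i" "Suc i \<le> n" and diag: "x i = x (Suc i)"
  then have "opPQ (Suc i) i F (x(p := v)) = 0"
    using assms unfolding adjacent_vanishing_def by simp
  then show "opPQ (Suc i) i (\<lambda>x. F (x(p := v))) x = 0"
    using i assms(2) by (simp add: opPQ_fix)
qed

lemma adjacent_vanishing_diffD:
  assumes "adjacent_vanishing n F" "n < q"
  shows "adjacent_vanishing n (diffD q F)"
  unfolding adjacent_vanishing_def
proof (intro allI impI)
  fix i and x :: "nat \<Rightarrow> real"
  assume i: "1 \<le> i" "Suc i \<le> n" and diag: "x i = x (Suc i)"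
  then have "opPQ (Suc i) i F (x(q := x q + 1)) = 0" "opPQ (Suc i) i F x = 0"
    using assms unfolding adjacent_vanishing_def by simp_all
  moreover have "opPQ (Suc i) i (diffD q F) x = diffD q (opPQ (Suc i) i F) x"
    by (simp only: opPQ_diffD_commute)
  ultimately show "opPQ (Suc i) i (diffD q F) x = 0"
    by (simp add: diffD_def shiftE_def)
qed

lemma adjacent_vanishing_uminus: "adjacent_vanishing n F \<Longrightarrow> adjacent_vanishing n (\<lambda>x. - F x)"
  by (simp add: adjacent_vanishing_def opPQ_uminus)

lemma diffD_diffD_on_diagonal:
  assumes "adjacent_vanishing n F" "1 \<le> i" "Suc i \<le> n" "z i = z (Suc i)"
  shows "diffD i (diffD (Suc i) F) z = - F (z(i := z i + 1))"
proof -
  have "opPQ (Suc i) i F z = 0"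
    using assms unfolding adjacent_vanishing_def by blast
  then show ?thesis
    by (simp add: opPQ_apply diffD_def shiftE_def fun_upd_twist)
qed

definition depends_only_on :: "nat set \<Rightarrow> ((nat \<Rightarrow> real) \<Rightarrow> real) \<Rightarrow> bool" where
  "depends_only_on S F \<longleftrightarrow> (\<forall>x y. (\<forall>i\<in>S. x i = y i) \<longrightarrow> F x = F y)"

lemma depends_only_onD: "depends_only_on S F \<Longrightarrow> (\<And>i. i \<in> S \<Longrightarrow> x i = y i) \<Longrightarrow> F x = F y"
  by (auto simp: depends_only_on_def)

lemma depends_only_on_shiftE: "depends_only_on S F \<Longrightarrow> depends_only_on S (shiftE p F)"
  unfolding depends_only_on_def shiftE_def by (metis fun_upd_apply)

lemma depends_only_on_opPQ: "depends_only_on S F \<Longrightarrow> depends_only_on S (opPQ p q F)"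
  using depends_only_on_shiftE[of S] unfolding opPQ_eq depends_only_on_def by metis

lemma depends_only_on_op_prod: "finite T \<Longrightarrow> depends_only_on S F \<Longrightarrow> depends_only_on S (op_prod T F)"
  by (induction T rule: finite_pair_induct) (simp_all add: op_prod_insert depends_only_on_opPQ)

lemma depends_only_on_diffD: "depends_only_on S F \<Longrightarrow> depends_only_on S (diffD q F)"
  using depends_only_on_shiftE[of S] unfolding diffD_def depends_only_on_def by metis

lemma depends_only_on_fix: "depends_only_on S F \<Longrightarrow> depends_only_on (S - {p}) (\<lambda>x. F (x(p := v)))"
  unfolding depends_only_on_def by (metis Diff_iff fun_upd_apply singletonD)

lemma depends_only_on_uminus: "depends_only_on S F \<Longrightarrow> depends_only_on S (\<lambda>x. - F x)"
  by (simp add: depends_only_on_def)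

fun diffs_upto :: "nat \<Rightarrow> ((nat \<Rightarrow> real) \<Rightarrow> real) \<Rightarrow> (nat \<Rightarrow> real) \<Rightarrow> real" where
  "diffs_upto 0 F = F"
| "diffs_upto (Suc m) F = diffD (Suc m) (diffs_upto m F)"

lemma diffs_upto_Suc_inner: "diffs_upto (Suc m) F = diffs_upto m (diffD (Suc m) F)"
proof -
  have "diffD p (diffs_upto m F) = diffs_upto m (diffD p F)" for p
    by (induction m) (simp_all, metis diffD_commute)
  then show ?thesis
    by simp
qed

lemma diffs_upto_fix:
  assumes "m < p"
  shows "diffs_upto m F (x(p := v)) = diffs_upto m (\<lambda>y. F (y(p := v))) x"
proof -
  have "diffs_upto m (\<lambda>y. F (y(p := v))) = (\<lambda>y. diffs_upto m F (y(p := v)))"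
    using assms by (induction m) (simp_all add: diffD_fix)
  then show ?thesis
    by simp
qed

lemma op_prod_diffs_upto: "finite S \<Longrightarrow> op_prod S (diffs_upto m F) = diffs_upto m (op_prod S F)"
  by (induction m) (simp_all add: op_prod_diffD_commute)

lemma diffs_upto_update_last:
  "diffs_upto (Suc m) F (x(Suc m := v)) = diffs_upto m (\<lambda>y. diffD (Suc m) F (y(Suc m := v))) x"
  unfolding diffs_upto_Suc_inner by (rule diffs_upto_fix) simp

lemma adjacent_vanishing_diffD_fix:
  "1 \<le> p \<Longrightarrow> adjacent_vanishing p F \<Longrightarrow> adjacent_vanishing (p - 1) (\<lambda>y. diffD p F (y(p := v)))"
  by (intro adjacent_vanishing_fix adjacent_vanishing_diffD) (auto intro: adjacent_vanishing_mono)

lemma depends_only_on_diffD_fix: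
  assumes "depends_only_on {1..<Suc p} F"
  shows "depends_only_on {1..<p} (\<lambda>y. diffD p F (y(p := v)))"
proof -
  have "{1..<Suc p} - {p} = {1..<p}"
    by auto
  then show ?thesis
    using depends_only_on_fix[OF depends_only_on_diffD[OF assms], where p = p and v = v] by metis
qed

lemma adjacent_vanishing_fix_pair:
  assumes "1 \<le> q" "adjacent_vanishing (Suc q) F"
  shows "adjacent_vanishing (q - 1) (\<lambda>y. - F (y(q := a, Suc q := b)))"
proof -
  have "adjacent_vanishing (q - 1) (\<lambda>y. F (y(Suc q := b)))"
    using assms by (intro adjacent_vanishing_fix) (auto intro: adjacent_vanishing_mono)
  then have "adjacent_vanishing (q - 1) (\<lambda>y. F (y(q := a, Suc q := b)))"
    using adjacent_vanishing_fix[where F = "\<lambda>z. F (z(Suc q := b))" and p = q and v = a] assms(1)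
    by simp
  then show ?thesis
    by (rule adjacent_vanishing_uminus)
qed

lemma depends_only_on_fix_pair:
  assumes "depends_only_on {1..<Suc (Suc q)} F"
  shows "depends_only_on {1..<q} (\<lambda>y. - F (y(q := a, Suc q := b)))"
proof -
  have "{1..<Suc (Suc q)} - {Suc q} - {q} = {1..<q}"
    by auto
  then show ?thesis
    using depends_only_on_uminus[OF depends_only_on_fix[OF depends_only_on_fix[OF assms,
        where p = "Suc q" and v = b], where p = q and v = a]]
    by simp
qed

lemma diffs_upto_update_diagonal:
  assumes "1 \<le> q" "adjacent_vanishing (Suc q) F"
  shows "diffs_upto (Suc q) F (y(q := c, Suc q := c)) = diffs_upto (q - 1) (\<lambda>z. - F (z(q := c + 1, Suc q := c))) y"
proof -
  obtain m where q: "q = Suc m"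
    using assms(1) by (cases q) auto
  have "diffs_upto (Suc q) F (y(q := c, Suc q := c)) = diffs_upto m (diffD q (diffD (Suc q) F)) (y(q := c, Suc q := c))"
    unfolding q by (simp only: diffs_upto_Suc_inner)
  also have "\<dots> = diffs_upto m (\<lambda>z. diffD q (diffD (Suc q) F) (z(q := c, Suc q := c))) y"
    using q by (simp add: diffs_upto_fix)
  also have "(\<lambda>z. diffD q (diffD (Suc q) F) (z(q := c, Suc q := c))) = (\<lambda>z. - F (z(q := c + 1, Suc q := c)))"
  proof
    fix z :: "nat \<Rightarrow> real"
    have "diffD q (diffD (Suc q) F) (z(q := c, Suc q := c))
        = - F ((z(q := c, Suc q := c))(q := (z(q := c, Suc q := c)) q + 1))"
      by (rule diffD_diffD_on_diagonal[of "Suc q"]) (use assms in auto)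
    then show "diffD q (diffD (Suc q) F) (z(q := c, Suc q := c)) = - F (z(q := c + 1, Suc q := c))"
      by (simp add: fun_upd_twist)
  qed
  finally show ?thesis
    by (simp only: q diff_Suc_1)
qed

lemma sum_telescope_int:
  fixes g :: "int \<Rightarrow> real"
  assumes "a \<le> b + 1"
  shows "(\<Sum>t\<in>{a..b}. g (t + 1) - g t) = g (b + 1) - g a"
proof -
  have "a - 1 \<le> b"
    using assms by simp
  then show ?thesis
  proof (induction b rule: int_ge_induct)
    case (step b)
    then have "{a..b + 1} = insert (b + 1) {a..b}"
      by auto
    with step show ?case
      by simp
  qed simp
qed

lemma sum_diffD_telescope:
  assumes "a \<le> b + 1"
  shows "(\<Sum>t\<in>{a..b}. diffD p F (y(p := of_int t))) = F (y(p := of_int b + 1)) - F (y(p := of_int a))"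
  using sum_telescope_int[OF assms, of "\<lambda>t. F (y(p := of_int t))"] by (simp add: diffD_def shiftE_def)

section \<open>Binomial determinants\<close>

text \<open>Rows are indexed from 0, so row \<open>i\<close> involves \<open>x (Suc i)\<close>; \<open>c i\<close> offsets the lower
  indices in row \<open>i\<close>.\<close>

definition binom_det :: "(nat \<Rightarrow> nat) \<Rightarrow> nat \<Rightarrow> (nat \<Rightarrow> real) \<Rightarrow> real" where
  "binom_det c n x = det (mat n n (\<lambda>(i, j). x (Suc i) gchoose (j + c i)))"

lemma det_mat_row_add:
  fixes A B C :: "nat \<Rightarrow> nat \<Rightarrow> 'a :: comm_ring_1"
  assumes "k < n"
    and "\<And>i j. i \<noteq> k \<Longrightarrow> B i j = A i j" "\<And>i j. i \<noteq> k \<Longrightarrow> C i j = A i j"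
    and "\<And>j. A k j = B k j + C k j"
  shows "det (mat n n (\<lambda>(i, j). A i j)) = det (mat n n (\<lambda>(i, j). B i j)) + det (mat n n (\<lambda>(i, j). C i j))"
proof -
  let ?b = "\<lambda>i. vec n (B i)" and ?c = "\<lambda>i. vec n (C i)" and ?a = "\<lambda>i. vec n (A i)"
  have "mat n n (\<lambda>(i, j). A i j) = mat\<^sub>r n n (\<lambda>i. if i = k then ?b i + ?c i else ?a i)"
    and "mat n n (\<lambda>(i, j). B i j) = mat\<^sub>r n n (\<lambda>i. if i = k then ?b i else ?a i)"
    and "mat n n (\<lambda>(i, j). C i j) = mat\<^sub>r n n (\<lambda>i. if i = k then ?c i else ?a i)"
    using assms by (auto intro!: eq_matI)
  then show ?thesis
    using assms(1) by (simp add: det_row_add)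
qed

lemma binom_det_diffD:
  assumes "s < n" "c s = Suc d"
  shows "diffD (Suc s) (binom_det c n) = binom_det (c(s := d)) n"
proof
  fix x
  have "binom_det c n (x(Suc s := x (Suc s) + 1)) = binom_det c n x + binom_det (c(s := d)) n x"
    unfolding binom_det_def
    by (rule det_mat_row_add[where k = s]) (use assms in \<open>auto simp: gbinomial_Suc_Suc\<close>)
  then show "diffD (Suc s) (binom_det c n) x = binom_det (c(s := d)) n x"
    by (simp add: diffD_def shiftE_def)
qed

lemma diffs_upto_binom_det:
  "s \<le> n \<Longrightarrow> diffs_upto s (binom_det (\<lambda>_. 1) n) = binom_det (\<lambda>i. if i < s then 0 else 1) n"
proof (induction s)
  case (Suc s)
  have "(\<lambda>i. if i < s then 0 else 1 :: nat)(s := 0) = (\<lambda>i. if i < Suc s then 0 else 1)"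
    by auto
  with Suc show ?case
    by (simp add: binom_det_diffD)
qed simp

lemma binom_det_cong: "(\<And>i. i < n \<Longrightarrow> c i = d i) \<Longrightarrow> binom_det c n = binom_det d n"
  unfolding binom_det_def by (intro ext arg_cong[where f = det] eq_matI) auto

lemma diffs_upto_binom_det_ones: "diffs_upto n (binom_det (\<lambda>_. 1) n) = binom_det (\<lambda>_. 0) n"
proof -
  have "binom_det (\<lambda>i. if i < n then 0 else 1) n = binom_det (\<lambda>_. 0) n"
    by (rule binom_det_cong) simp
  then show ?thesis
    using diffs_upto_binom_det[of n n] by simp
qed

lemma binom_det_transpose:
  assumes "1 \<le> i" "Suc i \<le> n"
  shows "binom_det (\<lambda>_. c) n (\<lambda>j. x (transpose i (Suc i) j)) = - binom_det (\<lambda>_. c) n x"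
proof -
  let ?A = "mat n n (\<lambda>(k, j). x (Suc k) gchoose (j + c))"
  have "mat n n (\<lambda>(k, j). x (transpose i (Suc i) (Suc k)) gchoose (j + c)) = swaprows (i - 1) i ?A"
    using assms by (intro eq_matI) (auto simp: transpose_def)
  moreover have "det (swaprows (i - 1) i ?A) = - det ?A"
    by (rule det_swaprows[of _ n]) (use assms in auto)
  ultimately show ?thesis
    by (simp add: binom_det_def)
qed

lemma depends_only_on_binom_det: "depends_only_on {1..n} (binom_det c n)"
  unfolding depends_only_on_def binom_det_def
proof (intro allI impI)
  fix x y :: "nat \<Rightarrow> real"
  assume "\<forall>i\<in>{1..n}. x i = y i"
  then have "mat n n (\<lambda>(i, j). x (Suc i) gchoose (j + c i)) = mat n n (\<lambda>(i, j). y (Suc i) gchoose (j + c i))"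
    by (intro eq_matI) auto
  then show "det (mat n n (\<lambda>(i, j). x (Suc i) gchoose (j + c i)))
      = det (mat n n (\<lambda>(i, j). y (Suc i) gchoose (j + c i)))"
    by simp
qed

lemma binom_det_laplace:
  "binom_det (\<lambda>_. 0) (Suc n) x = (\<Sum>r=1..Suc n. (-1) ^ (r - 1) * binom_det (\<lambda>_. 1) n (\<lambda>i. x (skip r i)))"
proof -
  let ?A = "mat (Suc n) (Suc n) (\<lambda>(i, j). x (Suc i) gchoose (j + 0))"
  have "det ?A = (\<Sum>i<Suc n. ?A $$ (i, 0) * cofactor ?A i 0)"
    by (rule laplace_expansion_column) auto
  also have "\<dots> = (\<Sum>i<Suc n. (-1) ^ i * binom_det (\<lambda>_. 1) n (\<lambda>j. x (skip (Suc i) j)))"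
  proof (rule sum.cong[OF refl])
    fix i assume "i \<in> {..<Suc n}"
    then have "mat_delete ?A i 0 = mat n n (\<lambda>(k, j). x (skip (Suc i) (Suc k)) gchoose (j + 1))"
      by (intro eq_matI) (auto simp: mat_delete_def skip_def)
    then show "?A $$ (i, 0) * cofactor ?A i 0 = (-1) ^ i * binom_det (\<lambda>_. 1) n (\<lambda>j. x (skip (Suc i) j))"
      using \<open>i \<in> {..<Suc n}\<close> by (simp add: cofactor_def binom_det_def)
  qed
  also have "\<dots> = (\<Sum>r=1..Suc n. (-1) ^ (r - 1) * binom_det (\<lambda>_. 1) n (\<lambda>i. x (skip r i)))"
    by (rule sum.reindex_bij_witness[where i = "\<lambda>r. r - 1" and j = Suc]) auto
  finally show ?thesis
    by (simp add: binom_det_def)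
qed

lemma sum_gchoose_bidiagonal_column:
  fixes y c :: real
  assumes "j < N"
  shows "(\<Sum>l<N. (y gchoose l) * (if l = j then (if j = 0 then 1 else real j)
             else if j = Suc l then - (c - real l) else 0))
       = (if j = 0 then 1 else (y - c) * (y gchoose (j - 1)))"
proof (cases j)
  case 0
  then show ?thesis
    using assms by (simp add: if_distrib[of "\<lambda>u. _ * u"] sum.delta cong: if_cong)
next
  case (Suc t)
  have "(\<Sum>l<N. (y gchoose l) * (if l = j then real j else if j = Suc l then - (c - real l) else 0))
      = (\<Sum>l<N. (if l = j then (y gchoose j) * real j else 0) + (if l = t then (y gchoose t) * - (c - real t) else 0))"
    by (rule sum.cong) (auto simp: Suc)
  also have "\<dots> = (y gchoose Suc t) * real (Suc t) + (y gchoose t) * - (c - real t)"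
    using assms Suc by (simp add: sum.distrib)
  also have "(y gchoose Suc t) * real (Suc t) = (y - real t) * (y gchoose t)"
    using gbinomial_absorption[of t y] gbinomial_absorb_comp[of y t] by (simp add: mult.commute)
  also have "(y - real t) * (y gchoose t) + (y gchoose t) * - (c - real t) = (y - c) * (y gchoose t)"
    by (simp add: algebra_simps)
  finally show ?thesis
    using Suc by simp
qed

lemma det_upper_bidiagonal_fact:
  "det (mat (Suc m) (Suc m) (\<lambda>(i, j). if i = j then (if j = 0 then 1 else real j)
      else if j = Suc i then - (c - real i) else 0)) = fact m"
  (is "det ?U = _")
proof -
  have "det ?U = prod_list (diag_mat ?U)"
    by (rule det_upper_triangular) (auto simp: upper_triangular_def)
  also have "\<dots> = (\<Prod>j\<in>{0..<Suc m}. (if j = 0 then 1 else real j))"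
    by (simp add: diag_mat_def prod.distinct_set_conv_list[symmetric] del: upt_Suc)
  also have "\<dots> = fact m"
    by (simp add: prod.atLeast0_lessThan_Suc_shift fact_prod_Suc del: prod.op_ivl_Suc)
  finally show ?thesis .
qed

lemma det_binom_mat_last_row_reduced:
  "det (mat (Suc m) (Suc m) (\<lambda>(k, j). if j = 0 then 1 else (x (Suc k) - x (Suc m)) * (x (Suc k) gchoose (j - 1))))
    = (\<Prod>k<m. x (Suc m) - x (Suc k)) * binom_det (\<lambda>_. 0) m x"
  (is "det ?B = _")
proof -
  let ?c = "x (Suc m)"
  let ?M = "mat m m (\<lambda>(k, j). (x (Suc k) - ?c) * (x (Suc k) gchoose j))"
  have "det ?B = (\<Sum>j<Suc m. ?B $$ (m, j) * cofactor ?B m j)"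
    by (rule laplace_expansion_row) auto
  also have "\<dots> = (\<Sum>j<Suc m. if j = 0 then cofactor ?B m 0 else 0)"
    by (intro sum.cong) auto
  also have "\<dots> = cofactor ?B m 0"
    by simp
  also have "\<dots> = (-1) ^ m * det ?M"
  proof -
    have "mat_delete ?B m 0 = ?M"
      by (rule eq_matI) (auto simp: mat_delete_def)
    then show ?thesis
      by (simp add: cofactor_def)
  qed
  also have "det ?M = (\<Prod>k\<in>{0..<m}. x (Suc k) - ?c) * binom_det (\<lambda>_. 0) m x"
  proof -
    have "?M = mat\<^sub>r m m (\<lambda>k. (x (Suc k) - ?c) \<cdot>\<^sub>v vec m (\<lambda>j. x (Suc k) gchoose j))"
      by (rule eq_matI) auto
    moreover have "mat m m (\<lambda>(k, j). x (Suc k) gchoose (j + 0)) = mat\<^sub>r m m (\<lambda>k. vec m (\<lambda>j. x (Suc k) gchoose j))"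
      by (rule eq_matI) auto
    ultimately show ?thesis
      by (simp add: det_rows_mul binom_det_def)
  qed
  also have "(\<Prod>k\<in>{0..<m}. x (Suc k) - ?c) = (-1) ^ m * (\<Prod>k<m. ?c - x (Suc k))"
    using prod_uminus[of "\<lambda>k. ?c - x (Suc k)" "{..<m}"] by (simp add: atLeast0LessThan)
  finally show ?thesis
    by (simp add: power_mult_distrib[symmetric])
qed

lemma binom_det_Suc:
  "binom_det (\<lambda>_. 0) (Suc m) x * fact m = (\<Prod>k<m. x (Suc m) - x (Suc k)) * binom_det (\<lambda>_. 0) m x"
proof -
  let ?c = "x (Suc m)"
  let ?A = "mat (Suc m) (Suc m) (\<lambda>(k, j). x (Suc k) gchoose (j + 0))"
  \<comment> \<open>Replace column \<open>j \<ge> 1\<close> by \<open>j\<close> times itself minus \<open>?c - (j - 1)\<close> times column \<open>j - 1\<close>;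
    since \<open>j * (y gchoose j) = (y - (j - 1)) * (y gchoose (j - 1))\<close>, this clears the last row.\<close>
  define U where "U = mat (Suc m) (Suc m) (\<lambda>(i, j). if i = j then (if j = 0 then 1 else real j)
      else if j = Suc i then - (?c - real i) else 0)"
  let ?B = "mat (Suc m) (Suc m) (\<lambda>(k, j). if j = 0 then 1 else (x (Suc k) - ?c) * (x (Suc k) gchoose (j - 1)))"
  have "?A * U = ?B"
  proof (rule eq_matI)
    fix k j assume "k < dim_row ?B" "j < dim_col ?B"
    then have kj: "k < Suc m" "j < Suc m"
      by auto
    then have "(?A * U) $$ (k, j) = (\<Sum>l<Suc m. (x (Suc k) gchoose l) * U $$ (l, j))"
      by (simp add: U_def scalar_prod_def atLeast0LessThan)
    also have "\<dots> = (\<Sum>l<Suc m. (x (Suc k) gchoose l) * (if l = j then (if j = 0 then 1 else real j)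
        else if j = Suc l then - (?c - real l) else 0))"
      using kj by (intro sum.cong) (auto simp: U_def)
    also have "\<dots> = ?B $$ (k, j)"
      using kj by (simp only: sum_gchoose_bidiagonal_column[OF kj(2)]) simp
    finally show "(?A * U) $$ (k, j) = ?B $$ (k, j)" .
  qed (auto simp: U_def)
  moreover have "det (?A * U) = det ?A * det U"
    by (rule det_mult) (auto simp: U_def)
  ultimately show ?thesis
    using det_binom_mat_last_row_reduced[of m x] det_upper_bidiagonal_fact[of m ?c]
    by (simp add: binom_det_def U_def)
qed

lemma vdm_Suc:
  "vdm (Suc m) x = vdm m x * (\<Prod>i\<in>{1..m}. (x (Suc m) - x i) / (real (Suc m) - real i))"
proof -
  let ?S = "\<lambda>n. {(i, j). 1 \<le> i \<and> i < j \<and> j \<le> (n::nat)}"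
  let ?f = "\<lambda>(i, j). (x j - x i) / (real j - real i)"
  have "finite (?S m)"
    by (rule finite_subset[of _ "{1..m} \<times> {1..m}"]) auto
  moreover have "?S (Suc m) = ?S m \<union> (\<lambda>i. (i, Suc m)) ` {1..m}"
    by (auto simp: image_iff)
  moreover have "?S m \<inter> (\<lambda>i. (i, Suc m)) ` {1..m} = {}"
    by auto
  ultimately have "vdm (Suc m) x = prod ?f (?S m) * prod ?f ((\<lambda>i. (i, Suc m)) ` {1..m})"
    unfolding vdm_def by (simp add: prod.union_disjoint)
  then show ?thesis
    by (simp add: vdm_def prod.reindex inj_on_def)
qed

lemma vdm_eq_binom_det: "vdm n = binom_det (\<lambda>_. 0) n"
proof
  fix x
  show "vdm n x = binom_det (\<lambda>_. 0) n x"
  proof (induction n)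
    case 0
    have no_pairs: "{(i, j). 1 \<le> i \<and> i < j \<and> j \<le> (0::nat)} = {}"
      by auto
    show ?case
      unfolding vdm_def no_pairs by (simp add: binom_det_def)
  next
    case (Suc m)
    have "(\<Prod>i\<in>{1..m}. real (Suc m) - real i) = fact m"
    proof -
      have "(\<Prod>i\<in>{1..m}. real (Suc m) - real i) = (\<Prod>i\<in>{1..m}. real i)"
        by (rule prod.reindex_bij_witness[where i = "\<lambda>i. Suc m - i" and j = "\<lambda>i. Suc m - i"]) auto
      then show ?thesis
        by (simp add: fact_prod)
    qed
    moreover have "(\<Prod>i\<in>{1..m}. x (Suc m) - x i) = (\<Prod>k<m. x (Suc m) - x (Suc k))"
      by (rule prod.reindex_bij_witness[where i = Suc and j = "\<lambda>i. i - 1"]) auto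
    ultimately have "vdm (Suc m) x = vdm m x * (\<Prod>k<m. x (Suc m) - x (Suc k)) / fact m"
      by (simp add: vdm_Suc prod_dividef)
    moreover have "binom_det (\<lambda>_. 0) (Suc m) x = binom_det (\<lambda>_. 0) m x * (\<Prod>k<m. x (Suc m) - x (Suc k)) / fact m"
      using binom_det_Suc[of m x] by (simp add: field_simps)
    ultimately show ?case
      using Suc by simp
  qed
qed

section \<open>Summation over interlacing rows\<close>

definition interlacing :: "nat \<Rightarrow> (nat \<Rightarrow> int) \<Rightarrow> (nat \<Rightarrow> int) set" where
  "interlacing n k = {l. (\<forall>j. j \<notin> {1..<n} \<longrightarrow> l j = 0) \<and>
                         (\<forall>j\<in>{1..<n}. k j \<le> l j \<and> l j \<le> k (Suc j)) \<and>
                         (\<forall>j. 1 \<le> j \<longrightarrow> Suc j < n \<longrightarrow> l j < l (Suc j))}"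

lemma finite_interlacing: "finite (interlacing n k)"
proof -
  let ?B = "\<Union>j\<in>{1..<n}. {k j..k (Suc j)}"
  have "interlacing n k \<subseteq> {l. \<forall>j. (j \<in> {1..<n} \<longrightarrow> l j \<in> ?B) \<and> (j \<notin> {1..<n} \<longrightarrow> l j = 0)}"
    by (force simp: interlacing_def)
  moreover have "finite {l. \<forall>j. (j \<in> {1..<n} \<longrightarrow> l j \<in> ?B) \<and> (j \<notin> {1..<n} \<longrightarrow> l j = 0)}"
    by (rule finite_set_of_finite_funs) auto
  ultimately show ?thesis
    by (rule finite_subset)
qed

lemma interlacing_one: "interlacing (Suc 0) k = {\<lambda>_. 0}"
  by (auto simp: interlacing_def)

lemma interlacing_upper: "l \<in> interlacing n k \<Longrightarrow> 1 \<le> j \<Longrightarrow> j < n \<Longrightarrow> l j \<le> k (Suc j)"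
  and interlacing_outside: "l \<in> interlacing n k \<Longrightarrow> n \<le> j \<Longrightarrow> l j = 0"
  by (auto simp: interlacing_def)

lemma interlacing_Suc_iff:
  assumes "1 \<le> p"
  shows "l \<in> interlacing (Suc p) k \<longleftrightarrow>
    l(p := 0) \<in> interlacing p k \<and> l p \<in> {k p..k (Suc p)} \<and> (2 \<le> p \<longrightarrow> l (p - 1) < l p)"
proof
  assume "l \<in> interlacing (Suc p) k"
  then show "l(p := 0) \<in> interlacing p k \<and> l p \<in> {k p..k (Suc p)} \<and> (2 \<le> p \<longrightarrow> l (p - 1) < l p)"
    using assms unfolding interlacing_def by (auto dest: spec[of _ "p - 1"])
next
  assume "l(p := 0) \<in> interlacing p k \<and> l p \<in> {k p..k (Suc p)} \<and> (2 \<le> p \<longrightarrow> l (p - 1) < l p)"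
  then show "l \<in> interlacing (Suc p) k"
    using assms unfolding interlacing_def
    by (auto simp: less_Suc_eq split: if_splits)
qed

text \<open>Appending an entry \<open>t\<close> to an interlacing row of length \<open>p - 1\<close> fails to give one of
  length \<open>p\<close> exactly when \<open>t = l (p - 1) = k p\<close>.\<close>

lemma sum_interlacing_Suc:
  fixes A :: "(nat \<Rightarrow> int) \<Rightarrow> 'a :: ab_group_add"
  assumes "1 \<le> p" "k p \<le> k (Suc p)"
  shows "(\<Sum>l\<in>interlacing (Suc p) k. A l)
    = (\<Sum>t\<in>{k p..k (Suc p)}. \<Sum>l\<in>interlacing p k. A (l(p := t)))
      - (\<Sum>l\<in>{l \<in> interlacing p k. 2 \<le> p \<and> l (p - 1) = k p}. A (l(p := k p)))"
proof -
  let ?T = "{k p..k (Suc p)} \<times> interlacing p k"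
  let ?Bad = "{k p} \<times> {l \<in> interlacing p k. 2 \<le> p \<and> l (p - 1) = k p}"
  have below: "l (p - 1) \<le> k p" if "l \<in> interlacing p k" "2 \<le> p" for l
    using interlacing_upper[OF that(1), of "p - 1"] that(2) by simp
  have "?Bad \<subseteq> ?T"
    using below assms(2) by auto
  moreover have "finite ?T"
    by (simp add: finite_interlacing)
  ultimately have "(\<Sum>(t, l)\<in>?T. A (l(p := t))) = (\<Sum>(t, l)\<in>?T - ?Bad. A (l(p := t))) + (\<Sum>(t, l)\<in>?Bad. A (l(p := t)))"
    by (rule sum.subset_diff)
  moreover have "(\<Sum>(t, l)\<in>?T - ?Bad. A (l(p := t))) = (\<Sum>l\<in>interlacing (Suc p) k. A l)"
  proof (rule sum.reindex_bij_witness[where i = "\<lambda>l. (l p, l(p := 0))" and j = "\<lambda>(t, l). l(p := t)"])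
    fix tl assume "tl \<in> ?T - ?Bad"
    moreover obtain t l where "tl = (t, l)"
      by fastforce
    ultimately show "(\<lambda>l. (l p, l(p := 0))) ((\<lambda>(t, l). l(p := t)) tl) = tl"
      and "(\<lambda>(t, l). l(p := t)) tl \<in> interlacing (Suc p) k"
      using assms below[of l] interlacing_outside[of l p k]
      by (auto simp: interlacing_Suc_iff fun_upd_idem)
  qed (use assms in \<open>auto simp: interlacing_Suc_iff\<close>)
  moreover have "(\<Sum>(t, l)\<in>?Bad. A (l(p := t))) = (\<Sum>l\<in>{l \<in> interlacing p k. 2 \<le> p \<and> l (p - 1) = k p}. A (l(p := k p)))"
    by (simp add: sum.cartesian_product[symmetric])
  ultimately show ?thesis
    by (simp add: sum.cartesian_product)
qed

lemma sum_interlacing_last_fixed: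
  assumes "1 \<le> p" "k p < k (Suc p)"
  shows "(\<Sum>l\<in>{l \<in> interlacing (Suc p) k. l p = k (Suc p)}. A l) = (\<Sum>l\<in>interlacing p k. A (l(p := k (Suc p))))"
proof (rule sum.reindex_bij_witness[where i = "\<lambda>l. l(p := k (Suc p))" and j = "\<lambda>l. l(p := 0)"])
  fix l assume "l \<in> {l \<in> interlacing (Suc p) k. l p = k (Suc p)}"
  then show "(l(p := 0))(p := k (Suc p)) = l" and "l(p := 0) \<in> interlacing p k"
    and "A ((l(p := 0))(p := k (Suc p))) = A l"
    using assms by (auto simp: interlacing_Suc_iff fun_upd_idem)
next
  fix l assume l: "l \<in> interlacing p k"
  then show "(l(p := k (Suc p)))(p := 0) = l"
    using interlacing_outside[OF l, of p] by auto
  have "2 \<le> p \<Longrightarrow> l (p - 1) \<le> k p"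
    using interlacing_upper[OF l, of "p - 1"] by simp
  then show "l(p := k (Suc p)) \<in> {l \<in> interlacing (Suc p) k. l p = k (Suc p)}"
    using l assms interlacing_outside[OF l, of p] by (auto simp: interlacing_Suc_iff fun_upd_idem)
qed

definition drop_raise :: "nat \<Rightarrow> (nat \<Rightarrow> real) \<Rightarrow> nat \<Rightarrow> real" where
  "drop_raise r x = (\<lambda>j. if j < r then x j else x (Suc j) + 1)"

lemma drop_raise_upd_raised: "r \<le> p \<Longrightarrow> (drop_raise r x)(p := x (Suc p) + 1) = drop_raise r x"
  by (auto simp: drop_raise_def)

lemma drop_raise_upd_last: "(drop_raise p x)(p := x p) = drop_raise (Suc p) x"
  by (auto simp: drop_raise_def)

lemma fischer_op_vdm_Suc:
  "fischer_op (Suc m) (vdm (Suc m)) x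
    = (\<Sum>r=1..Suc m. (-1) ^ (r - 1) * op_prod (increasing_pairs m) (binom_det (\<lambda>_. 1) m) (drop_raise r x))"
proof -
  let ?F = "op_prod (increasing_pairs m) (binom_det (\<lambda>_. 1) m)"
  have laplace: "vdm (Suc m) = (\<lambda>x. \<Sum>r=1..Suc m. (-1) ^ (r - 1) * binom_det (\<lambda>_. 1) m (\<lambda>i. x (skip r i)))"
    unfolding vdm_eq_binom_det by (rule ext) (rule binom_det_laplace)
  have "fischer_op (Suc m) (vdm (Suc m)) x
      = (\<Sum>r=1..Suc m. (-1) ^ (r - 1) * op_prod (increasing_pairs (Suc m)) (\<lambda>x. binom_det (\<lambda>_. 1) m (\<lambda>i. x (skip r i))) x)"
    unfolding fischer_op_eq_op_prod laplace by (simp only: op_prod_sum[OF finite_increasing_pairs])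
  also have "\<dots> = (\<Sum>r=1..Suc m. (-1) ^ (r - 1) * ?F (drop_raise r x))"
  proof (rule sum.cong[OF refl])
    fix r assume r: "r \<in> {1..Suc m}"
    have "op_prod (increasing_pairs (Suc m)) (\<lambda>x. binom_det (\<lambda>_. 1) m (\<lambda>i. x (skip r i))) x
        = ?F (\<lambda>i. shift_coords {r<..Suc m} x (skip r i))"
      using r op_prod_skip[of r "Suc m"] by simp
    also have "\<dots> = ?F (drop_raise r x)"
      by (rule depends_only_onD[OF depends_only_on_op_prod[OF finite_increasing_pairs depends_only_on_binom_det]])
        (auto simp: shift_coords_def skip_def drop_raise_def)
    finally show "(-1) ^ (r - 1) * op_prod (increasing_pairs (Suc m)) (\<lambda>x. binom_det (\<lambda>_. 1) m (\<lambda>i. x (skip r i))) x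
        = (-1) ^ (r - 1) * ?F (drop_raise r x)"
      by simp
  qed
  finally show ?thesis .
qed

lemma of_int_fun_upd: "(\<lambda>i. of_int ((l(p := t)) i)) = (\<lambda>i. of_int (l i))(p := of_int t)"
  by auto

lemma sum_interlacing_append_all:
  fixes F :: "(nat \<Rightarrow> real) \<Rightarrow> real" and k :: "nat \<Rightarrow> int"
  defines "x \<equiv> \<lambda>i. of_int (k i)"
  assumes "1 \<le> p" "k p \<le> k (Suc p)" "adjacent_vanishing p F" "depends_only_on {1..<Suc p} F"
    and IH: "\<And>G. adjacent_vanishing (p - 1) G \<Longrightarrow> depends_only_on {1..<p} G \<Longrightarrow>
      (\<Sum>l\<in>interlacing p k. diffs_upto (p - 1) G (\<lambda>i. of_int (l i))) = (\<Sum>r=1..p. (-1) ^ (r - 1) * G (drop_raise r x))"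
  shows "(\<Sum>t\<in>{k p..k (Suc p)}. \<Sum>l\<in>interlacing p k. diffs_upto p F (\<lambda>i. of_int ((l(p := t)) i)))
    = (\<Sum>r=1..p. (-1) ^ (r - 1) * (F (drop_raise r x) - F ((drop_raise r x)(p := x p))))"
proof -
  obtain m where p: "p = Suc m"
    using assms(2) by (cases p) auto
  have "diffs_upto p F (\<lambda>i. of_int ((l(p := t)) i))
      = diffs_upto (p - 1) (\<lambda>y. diffD p F (y(p := of_int t))) (\<lambda>i. of_int (l i))" for l and t :: int
    unfolding of_int_fun_upd p by (simp only: diffs_upto_update_last diff_Suc_1)
  moreover have "(\<Sum>l\<in>interlacing p k. diffs_upto (p - 1) (\<lambda>y. diffD p F (y(p := of_int t))) (\<lambda>i. of_int (l i)))
      = (\<Sum>r=1..p. (-1) ^ (r - 1) * diffD p F ((drop_raise r x)(p := of_int t)))" for t :: int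
    by (intro IH adjacent_vanishing_diffD_fix depends_only_on_diffD_fix assms)
  ultimately have "(\<Sum>t\<in>{k p..k (Suc p)}. \<Sum>l\<in>interlacing p k. diffs_upto p F (\<lambda>i. of_int ((l(p := t)) i)))
      = (\<Sum>r=1..p. (-1) ^ (r - 1) * (\<Sum>t\<in>{k p..k (Suc p)}. diffD p F ((drop_raise r x)(p := of_int t))))"
    by (simp add: sum.swap[of _ "{k p..k (Suc p)}"] sum_distrib_left)
  also have "\<dots> = (\<Sum>r=1..p. (-1) ^ (r - 1) * (F (drop_raise r x) - F ((drop_raise r x)(p := x p))))"
  proof (rule sum.cong[OF refl])
    fix r assume "r \<in> {1..p}"
    then have "(drop_raise r x)(p := of_int (k (Suc p)) + 1) = drop_raise r x"
      using drop_raise_upd_raised[of r p x] by (simp add: x_def)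
    then show "(-1) ^ (r - 1) * (\<Sum>t\<in>{k p..k (Suc p)}. diffD p F ((drop_raise r x)(p := of_int t)))
        = (-1) ^ (r - 1) * (F (drop_raise r x) - F ((drop_raise r x)(p := x p)))"
      using assms(3) by (simp add: sum_diffD_telescope x_def)
  qed
  finally show ?thesis .
qed

lemma sum_interlacing_append_repeated:
  fixes F :: "(nat \<Rightarrow> real) \<Rightarrow> real" and k :: "nat \<Rightarrow> int" and q :: nat
  defines "x \<equiv> \<lambda>i. of_int (k i)" and "c \<equiv> of_int (k (Suc q))"
  assumes "1 \<le> q" "k q < k (Suc q)" "adjacent_vanishing (Suc q) F" "depends_only_on {1..<Suc (Suc q)} F"
    and IH: "\<And>G. adjacent_vanishing (q - 1) G \<Longrightarrow> depends_only_on {1..<q} G \<Longrightarrow>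
      (\<Sum>l\<in>interlacing q k. diffs_upto (q - 1) G (\<lambda>i. of_int (l i))) = (\<Sum>r=1..q. (-1) ^ (r - 1) * G (drop_raise r x))"
  shows "(\<Sum>l\<in>{l \<in> interlacing (Suc q) k. 2 \<le> Suc q \<and> l q = k (Suc q)}.
      diffs_upto (Suc q) F (\<lambda>i. of_int ((l(Suc q := k (Suc q))) i)))
    = - (\<Sum>r=1..q. (-1) ^ (r - 1) * F ((drop_raise r x)(Suc q := c)))"
proof -
  have "(\<Sum>l\<in>{l \<in> interlacing (Suc q) k. 2 \<le> Suc q \<and> l q = k (Suc q)}.
        diffs_upto (Suc q) F (\<lambda>i. of_int ((l(Suc q := k (Suc q))) i)))
      = (\<Sum>l\<in>interlacing q k. diffs_upto (Suc q) F (\<lambda>i. of_int ((l(q := k (Suc q), Suc q := k (Suc q))) i)))"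
    using sum_interlacing_last_fixed[of q k] assms(3,4) by simp
  also have "\<dots> = (\<Sum>l\<in>interlacing q k. diffs_upto (q - 1) (\<lambda>y. - F (y(q := c + 1, Suc q := c))) (\<lambda>i. of_int (l i)))"
    by (simp only: of_int_fun_upd c_def[symmetric] diffs_upto_update_diagonal[OF assms(3,5)])
  also have "\<dots> = (\<Sum>r=1..q. (-1) ^ (r - 1) * - F ((drop_raise r x)(q := c + 1, Suc q := c)))"
    using IH[OF adjacent_vanishing_fix_pair[OF assms(3,5)] depends_only_on_fix_pair[OF assms(6)]]
    by simp
  also have "\<dots> = - (\<Sum>r=1..q. (-1) ^ (r - 1) * F ((drop_raise r x)(Suc q := c)))"
  proof -
    have "(drop_raise r x)(q := c + 1) = drop_raise r x" if "r \<in> {1..q}" for r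
      using that drop_raise_upd_raised[of r q x] by (simp add: x_def c_def)
    then show ?thesis
      by (simp add: sum_negf)
  qed
  finally show ?thesis .
qed

lemma sum_alternating_replace_last:
  fixes f g :: "nat \<Rightarrow> 'a :: comm_ring_1"
  assumes "1 \<le> p" "g p = f (Suc p)"
  shows "(\<Sum>r=1..p. (-1) ^ (r - 1) * (f r - g r)) + (\<Sum>r=1..p - 1. (-1) ^ (r - 1) * g r)
    = (\<Sum>r=1..Suc p. (-1) ^ (r - 1) * f r)"
proof -
  obtain q where p: "p = Suc q"
    using assms(1) by (cases p) auto
  have "(-1 :: 'a) ^ q = - ((-1) ^ Suc q)"
    by simp
  then show ?thesis
    using assms(2) by (simp add: p sum_subtractf right_diff_distrib)
qed

lemma sum_interlacing_diffs_upto_Suc: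
  fixes F :: "(nat \<Rightarrow> real) \<Rightarrow> real" and k :: "nat \<Rightarrow> int"
  defines "x \<equiv> \<lambda>i. of_int (k i)"
  assumes "1 \<le> p" "\<And>j. 1 \<le> j \<Longrightarrow> j \<le> p \<Longrightarrow> k j < k (Suc j)"
    and "adjacent_vanishing p F" "depends_only_on {1..<Suc p} F"
    and IH: "\<And>m G. 1 \<le> m \<Longrightarrow> m \<le> p \<Longrightarrow> adjacent_vanishing (m - 1) G \<Longrightarrow> depends_only_on {1..<m} G \<Longrightarrow>
      (\<Sum>l\<in>interlacing m k. diffs_upto (m - 1) G (\<lambda>i. of_int (l i))) = (\<Sum>r=1..m. (-1) ^ (r - 1) * G (drop_raise r x))"
  shows "(\<Sum>l\<in>interlacing (Suc p) k. diffs_upto p F (\<lambda>i. of_int (l i)))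
    = (\<Sum>r=1..Suc p. (-1) ^ (r - 1) * F (drop_raise r x))"
proof -
  have all: "(\<Sum>t\<in>{k p..k (Suc p)}. \<Sum>l\<in>interlacing p k. diffs_upto p F (\<lambda>i. of_int ((l(p := t)) i)))
      = (\<Sum>r=1..p. (-1) ^ (r - 1) * (F (drop_raise r x) - F ((drop_raise r x)(p := x p))))"
    unfolding x_def using assms(2) assms(3)[of p] by (intro sum_interlacing_append_all assms IH[unfolded x_def]) auto
  have repeated: "(\<Sum>l\<in>{l \<in> interlacing p k. 2 \<le> p \<and> l (p - 1) = k p}. diffs_upto p F (\<lambda>i. of_int ((l(p := k p)) i)))
      = - (\<Sum>r=1..p - 1. (-1) ^ (r - 1) * F ((drop_raise r x)(p := x p)))"
  proof (cases "p = 1")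
    case False
    then obtain q where p: "p = Suc q" "1 \<le> q"
      using assms(2) by (cases p) auto
    show ?thesis
      unfolding x_def using sum_interlacing_append_repeated[of q k F] p assms(3)[of q] assms(4,5) IH[unfolded x_def]
      by simp
  qed simp
  have "(\<Sum>l\<in>interlacing (Suc p) k. diffs_upto p F (\<lambda>i. of_int (l i)))
      = (\<Sum>r=1..p. (-1) ^ (r - 1) * (F (drop_raise r x) - F ((drop_raise r x)(p := x p))))
        + (\<Sum>r=1..p - 1. (-1) ^ (r - 1) * F ((drop_raise r x)(p := x p)))"
    using sum_interlacing_Suc[of p k "\<lambda>l. diffs_upto p F (\<lambda>i. of_int (l i))"] all repeated assms(2) assms(3)[of p]
    by simp
  then show ?thesis
    using sum_alternating_replace_last[where p = p and f = "\<lambda>r. F (drop_raise r x)"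
        and g = "\<lambda>r. F ((drop_raise r x)(p := x p))"] drop_raise_upd_last[of p x] assms(2)
    by simp
qed

lemma sum_interlacing_diffs_upto:
  fixes F :: "(nat \<Rightarrow> real) \<Rightarrow> real" and k :: "nat \<Rightarrow> int"
  assumes "1 \<le> n" "\<And>j. 1 \<le> j \<Longrightarrow> Suc j \<le> n \<Longrightarrow> k j < k (Suc j)"
    and "adjacent_vanishing (n - 1) F" "depends_only_on {1..<n} F"
  shows "(\<Sum>l\<in>interlacing n k. diffs_upto (n - 1) F (\<lambda>i. of_int (l i)))
    = (\<Sum>r=1..n. (-1) ^ (r - 1) * F (drop_raise r (\<lambda>i. of_int (k i))))"
  using assms
proof (induction n arbitrary: F rule: less_induct)
  case (less n)
  obtain p where n: "n = Suc p"
    using less.prems(1) by (cases n) auto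
  show ?case
  proof (cases "p = 0")
    case True
    have "F (\<lambda>_. 0) = F (drop_raise 1 (\<lambda>i. of_int (k i)))"
      by (rule depends_only_onD[OF less.prems(4)]) (simp add: n True)
    then show ?thesis
      by (simp add: n True interlacing_one)
  next
    case False
    show ?thesis
      unfolding n diff_Suc_1
    proof (rule sum_interlacing_diffs_upto_Suc)
      fix m :: nat and G
      assume "1 \<le> m" "m \<le> p" "adjacent_vanishing (m - 1) G" "depends_only_on {1..<m} G"
      then show "(\<Sum>l\<in>interlacing m k. diffs_upto (m - 1) G (\<lambda>i. of_int (l i)))
          = (\<Sum>r=1..m. (-1) ^ (r - 1) * G (drop_raise r (\<lambda>i. of_int (k i))))"
        using less.IH[of m G] less.prems(2) n by simp
    qed (use False less.prems n in auto)
  qed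
qed

section \<open>Monotone triangles\<close>

lemma monotone_triangles_zero: "monotone_triangles 0 k = {\<lambda>_ _. 0}"
  by (auto simp: monotone_triangles_def monotone_triangle_def fun_eq_iff)

lemma monotone_triangles_row_interlacing:
  assumes "a \<in> monotone_triangles (Suc m) k"
  shows "a m \<in> interlacing (Suc m) k"
  using assms unfolding monotone_triangles_def monotone_triangle_def interlacing_def
  by (auto dest: spec[of _ "Suc m"])

lemma monotone_triangles_delete_bottom:
  assumes "a \<in> monotone_triangles (Suc m) k"
  shows "a(Suc m := (\<lambda>_. 0)) \<in> monotone_triangles m (a m)"
  using assms unfolding monotone_triangles_def monotone_triangle_def by auto

lemma monotone_triangles_add_bottom:
  assumes "\<And>j. 1 \<le> j \<Longrightarrow> j \<le> m \<Longrightarrow> k j < k (Suc j)"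
    and "l \<in> interlacing (Suc m) k" "b \<in> monotone_triangles m l"
  shows "b(Suc m := (\<lambda>j. if j \<in> {1..Suc m} then k j else 0)) \<in> monotone_triangles (Suc m) k"
  using assms unfolding monotone_triangles_def monotone_triangle_def interlacing_def
  by auto

lemma monotone_triangles_fun_upd_bottom:
  assumes "a \<in> monotone_triangles n k"
  shows "a(n := (\<lambda>j. if j \<in> {1..n} then k j else 0)) = a"
proof (intro fun_upd_idem ext)
  fix j
  show "a n j = (if j \<in> {1..n} then k j else 0)"
    using assms unfolding monotone_triangles_def monotone_triangle_def by auto
qed

lemma monotone_triangles_last_row:
  assumes "l \<in> interlacing (Suc m) k" "b \<in> monotone_triangles m l"
  shows "b m = l" "b (Suc m) = (\<lambda>_. 0)"
proof -
  have "b m j = l j" for j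
    using assms unfolding monotone_triangles_def monotone_triangle_def interlacing_def
    by (cases "j \<in> {1..m}") auto
  then show "b m = l"
    by auto
  show "b (Suc m) = (\<lambda>_. 0)"
    using assms(2) unfolding monotone_triangles_def monotone_triangle_def by auto
qed

lemma finite_monotone_triangles: "finite (monotone_triangles n k)"
proof (induction n arbitrary: k)
  case 0
  then show ?case
    by (simp add: monotone_triangles_zero)
next
  case (Suc m)
  let ?f = "\<lambda>a. (a m, a(Suc m := (\<lambda>_. 0)))"
  have "inj_on ?f (monotone_triangles (Suc m) k)"
  proof (rule inj_on_inverseI)
    fix a assume "a \<in> monotone_triangles (Suc m) k"
    then show "(\<lambda>(l, b). b(Suc m := (\<lambda>j. if j \<in> {1..Suc m} then k j else 0))) (?f a) = a"
      using monotone_triangles_fun_upd_bottom[of a "Suc m" k] by simp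
  qed
  moreover have "?f ` monotone_triangles (Suc m) k \<subseteq> (SIGMA l:interlacing (Suc m) k. monotone_triangles m l)"
    by (auto simp: monotone_triangles_row_interlacing monotone_triangles_delete_bottom)
  moreover have "finite (SIGMA l:interlacing (Suc m) k. monotone_triangles m l)"
    by (intro finite_SigmaI finite_interlacing Suc.IH)
  ultimately show ?case
    by (rule inj_on_finite)
qed

lemma card_monotone_triangles_Suc:
  assumes "\<And>j. 1 \<le> j \<Longrightarrow> j \<le> m \<Longrightarrow> k j < k (Suc j)"
  shows "card (monotone_triangles (Suc m) k) = (\<Sum>l\<in>interlacing (Suc m) k. card (monotone_triangles m l))"
proof -
  let ?bottom = "\<lambda>j. if j \<in> {1..Suc m} then k j else 0"
  have "bij_betw (\<lambda>a. (a m, a(Suc m := (\<lambda>_. 0)))) (monotone_triangles (Suc m) k)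
      (SIGMA l:interlacing (Suc m) k. monotone_triangles m l)"
  proof (rule bij_betw_byWitness[where f' = "\<lambda>(l, b). b(Suc m := ?bottom)"])
    show "\<forall>a\<in>monotone_triangles (Suc m) k. (\<lambda>(l, b). b(Suc m := ?bottom)) (a m, a(Suc m := (\<lambda>_. 0))) = a"
      using monotone_triangles_fun_upd_bottom[of _ "Suc m" k] by simp
    show "\<forall>lb\<in>(SIGMA l:interlacing (Suc m) k. monotone_triangles m l).
        (\<lambda>a. (a m, a(Suc m := (\<lambda>_. 0)))) ((\<lambda>(l, b). b(Suc m := ?bottom)) lb) = lb"
      by (auto simp: monotone_triangles_last_row fun_upd_idem)
    show "(\<lambda>a. (a m, a(Suc m := (\<lambda>_. 0)))) ` monotone_triangles (Suc m) k
        \<subseteq> (SIGMA l:interlacing (Suc m) k. monotone_triangles m l)"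
      by (auto simp: monotone_triangles_row_interlacing monotone_triangles_delete_bottom)
    show "(\<lambda>(l, b). b(Suc m := ?bottom)) ` (SIGMA l:interlacing (Suc m) k. monotone_triangles m l)
        \<subseteq> monotone_triangles (Suc m) k"
      using monotone_triangles_add_bottom[of m k, OF assms] by auto
  qed
  then show ?thesis
    by (simp add: bij_betw_same_card card_SigmaI finite_interlacing finite_monotone_triangles)
qed

lemma real_card_monotone_triangles:
  assumes "\<And>j. 1 \<le> j \<Longrightarrow> Suc j \<le> n \<Longrightarrow> k j < k (Suc j)"
  shows "real (card (monotone_triangles n k)) = fischer_op n (vdm n) (\<lambda>i. of_int (k i))"
  using assms
proof (induction n arbitrary: k)
  case 0
  have "increasing_pairs 0 = {}"
    by (auto simp: increasing_pairs_def)
  then show ?case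
    by (simp add: monotone_triangles_zero fischer_op_eq_op_prod vdm_eq_binom_det binom_det_def)
next
  case (Suc m)
  let ?F = "op_prod (increasing_pairs m) (binom_det (\<lambda>_. 1) m)"
  have "real (card (monotone_triangles (Suc m) k)) = (\<Sum>l\<in>interlacing (Suc m) k. real (card (monotone_triangles m l)))"
    using Suc.prems by (simp add: card_monotone_triangles_Suc)
  also have "\<dots> = (\<Sum>l\<in>interlacing (Suc m) k. fischer_op m (vdm m) (\<lambda>i. of_int (l i)))"
    by (intro sum.cong refl Suc.IH) (auto simp: interlacing_def)
  also have "\<dots> = (\<Sum>l\<in>interlacing (Suc m) k. diffs_upto m ?F (\<lambda>i. of_int (l i)))"
    by (simp add: fischer_op_eq_op_prod vdm_eq_binom_det diffs_upto_binom_det_ones[symmetric] op_prod_diffs_upto)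
  also have "\<dots> = (\<Sum>r=1..Suc m. (-1) ^ (r - 1) * ?F (drop_raise r (\<lambda>i. of_int (k i))))"
  proof -
    have "adjacent_vanishing m ?F"
      by (rule adjacent_vanishing_op_prod) (simp add: binom_det_transpose)
    moreover have "depends_only_on {1..<Suc m} ?F"
      using depends_only_on_op_prod[OF finite_increasing_pairs depends_only_on_binom_det]
      by (simp add: atLeastLessThanSuc_atLeastAtMost)
    ultimately show ?thesis
      using sum_interlacing_diffs_upto[of "Suc m" k ?F] Suc.prems by simp
  qed
  also have "\<dots> = fischer_op (Suc m) (vdm (Suc m)) (\<lambda>i. of_int (k i))"
    by (rule fischer_op_vdm_Suc[symmetric])
  finally show ?case .
qed

theorem theorem1:
  fixes n :: nat and k :: "nat \<Rightarrow> int"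
  assumes "n \<ge> 1"
    and "\<And>i j. 1 \<le> i \<Longrightarrow> i < j \<Longrightarrow> j \<le> n \<Longrightarrow> k i < k j"
  shows "real (card (monotone_triangles n k)) = fischer_op n (vdm n) (\<lambda>i. real_of_int (k i))"
  using assms(2) by (intro real_card_monotone_triangles) auto

end
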